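(* With $\widehat{T}=UTU^*$, we have $\widehat{H}=1-S^*$, $\widehat{X}=S^*C_\gamma^*$, and $\widehat{V}=(1-S^* )C_\gamma^*$.
   Context: $H^2$ is the Hardy space of the unit disc $\mathbb{D}$, $k_\alpha(z)=\frac{1}{1-\bar\alpha z}$. The Sarason transform $U$ is the unique unitary operator from $L^2([0,1])$ onto $H^2$ with $U(x^n)=\frac{1}{n+1}k_{\frac{n}{n+1}}$ for integers $n\ge0$. On $L^2([0,1])$: $Hf(x)=\frac1x\int_0^xf(t)\,dt$ (Hardy operator), $Xf(x)=xf(x)$, and $Vf(x)=\int_0^xf(t)\,dt$. $S$ is the unilateral shift (multiplication by $z$) on $H^2$, $\gamma(z)=\frac{1}{2-z}$, and $C_\gamma$ is the composition operator $h\mapsto h\circ\gamma$ on $H^2$. *)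

theory Defs
  imports "HOL-Analysis.Analysis" "HOL-Complex_Analysis.Complex_Analysis"
begin

definition disc :: "complex set" where
  "disc = ball 0 1"

definition taylor_coeff :: "(complex \<Rightarrow> complex) \<Rightarrow> nat \<Rightarrow> complex" where
  "taylor_coeff f n = (deriv ^^ n) f 0 / of_nat (fact n)"

text \<open>H^2: holomorphic functions on the disc with square-summable Taylor coefficients.
  Elements are identified when they agree on the disc.\<close>
definition H2 :: "(complex \<Rightarrow> complex) set" where
  "H2 = {f. f holomorphic_on disc \<and> summable (\<lambda>n. (cmod (taylor_coeff f n))\<^sup>2)}"

definition H2_inner :: "(complex \<Rightarrow> complex) \<Rightarrow> (complex \<Rightarrow> complex) \<Rightarrow> complex" where
  "H2_inner f g = (\<Sum>n. taylor_coeff f n * cnj (taylor_coeff g n))"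

definition H2_eq :: "(complex \<Rightarrow> complex) \<Rightarrow> (complex \<Rightarrow> complex) \<Rightarrow> bool" where
  "H2_eq f g \<longleftrightarrow> (\<forall>z\<in>disc. f z = g z)"

definition kernel :: "complex \<Rightarrow> complex \<Rightarrow> complex" where
  "kernel \<alpha> z = 1 / (1 - cnj \<alpha> * z)"

definition shift :: "(complex \<Rightarrow> complex) \<Rightarrow> (complex \<Rightarrow> complex)" where
  "shift f = (\<lambda>z. z * f z)"

definition gamma :: "complex \<Rightarrow> complex" where
  "gamma z = 1 / (2 - z)"

definition comp_gamma :: "(complex \<Rightarrow> complex) \<Rightarrow> (complex \<Rightarrow> complex)" where
  "comp_gamma h = h \<circ> gamma"

definition H2_adjoint_of ::
  "((complex \<Rightarrow> complex) \<Rightarrow> (complex \<Rightarrow> complex)) \<Rightarrow> ((complex \<Rightarrow> complex) \<Rightarrow> (complex \<Rightarrow> complex)) \<Rightarrow> bool" where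
  "H2_adjoint_of A T \<longleftrightarrow> (\<forall>g\<in>H2. A g \<in> H2) \<and>
     (\<forall>f\<in>H2. \<forall>g\<in>H2. H2_inner (T f) g = H2_inner f (A g))"

text \<open>Square-integrable complex functions on [0,1] (values outside [0,1] are irrelevant;
  elements are identified up to a.e. equality through the inner product).\<close>
definition L2 :: "(real \<Rightarrow> complex) set" where
  "L2 = {f. f \<in> borel_measurable (lebesgue_on {0..1}) \<and>
            integrable (lebesgue_on {0..1}) (\<lambda>x. (cmod (f x))\<^sup>2)}"

definition L2_inner :: "(real \<Rightarrow> complex) \<Rightarrow> (real \<Rightarrow> complex) \<Rightarrow> complex" where
  "L2_inner f g = integral\<^sup>L (lebesgue_on {0..1}) (\<lambda>x. f x * cnj (g x))"

definition hardy_op :: "(real \<Rightarrow> complex) \<Rightarrow> (real \<Rightarrow> complex)" where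
  "hardy_op f = (\<lambda>x. (1 / complex_of_real x) * integral\<^sup>L (lebesgue_on {0..x}) f)"

definition mult_x :: "(real \<Rightarrow> complex) \<Rightarrow> (real \<Rightarrow> complex)" where
  "mult_x f = (\<lambda>x. complex_of_real x * f x)"

definition volterra :: "(real \<Rightarrow> complex) \<Rightarrow> (real \<Rightarrow> complex)" where
  "volterra f = (\<lambda>x. integral\<^sup>L (lebesgue_on {0..x}) f)"

definition sarason_transform :: "((real \<Rightarrow> complex) \<Rightarrow> (complex \<Rightarrow> complex)) \<Rightarrow> bool" where
  "sarason_transform U \<longleftrightarrow>
     (\<forall>f\<in>L2. U f \<in> H2) \<and>
     (\<forall>f\<in>L2. \<forall>g\<in>L2. \<forall>a b. H2_eq (U (\<lambda>x. a * f x + b * g x)) (\<lambda>z. a * U f z + b * U g z)) \<and>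
     (\<forall>f\<in>L2. \<forall>g\<in>L2. H2_inner (U f) (U g) = L2_inner f g) \<and>
     (\<forall>h\<in>H2. \<exists>f\<in>L2. H2_eq (U f) h) \<and>
     (\<forall>n::nat. H2_eq (U (\<lambda>x. complex_of_real (x ^ n)))
                      (\<lambda>z. (1 / of_nat (n + 1)) * kernel (of_real (real n / real (n + 1))) z))"

text \<open>For T on L^2, "U T U^* = A" on H^2: for every g in H^2, U^* g is (up to a.e.)
  the f in L^2 with U f = g, and the claim is U (T f) = A g.\<close>
definition conj_eq ::
  "((real \<Rightarrow> complex) \<Rightarrow> (complex \<Rightarrow> complex)) \<Rightarrow> ((real \<Rightarrow> complex) \<Rightarrow> (real \<Rightarrow> complex))
    \<Rightarrow> ((complex \<Rightarrow> complex) \<Rightarrow> (complex \<Rightarrow> complex)) \<Rightarrow> bool" where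
  "conj_eq U T A \<longleftrightarrow> (\<forall>g\<in>H2. \<forall>f\<in>L2. H2_eq (U f) g \<longrightarrow> H2_eq (U (T f)) (A g))"

end

theory Submission
  imports Defs
begin

(*
  All three identities are checked on moments. The transform sends x^n to 1/(n + 1 - n z), and on
  these functions the shift and the composition with gamma act explicitly: z/(n + 1 - n z) is a
  combination of the images of x^n and 1, and its composition with gamma one of the images of 1
  and x^(n+1). By adjointness this expresses the moments of the preimages of S* g and C* g through
  the moments of the preimage of g, while Fubini gives the moments of V f. Moments determine
  integrable functions on [0,1]: if all moments of f vanish, so do those of its primitive V f,
  which is continuous and hence zero by the Weierstrass theorem; so f integrates to zero over every
  interval [0,c], and a Dynkin argument shows that f vanishes almost everywhere.
*)

lemma norm_mult_le_sum_squares: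
  fixes a b :: "'a::real_normed_div_algebra"
  shows "norm (a * b) \<le> (norm a)\<^sup>2 + (norm b)\<^sup>2"
proof -
  have "0 \<le> norm a * norm b"
    by simp
  then show ?thesis
    unfolding norm_mult using sum_squares_bound[of "norm a" "norm b"] by linarith
qed

lemma of_nat_add_one_neq_zero [simp]:
  "of_nat n + 1 \<noteq> (0::'a::semiring_char_0)" "1 + of_nat n \<noteq> (0::'a::semiring_char_0)"
  by (metis of_nat_Suc of_nat_neq_0 add.commute)+

lemma borel_measurable_cnj [measurable]:
  "f \<in> borel_measurable M \<Longrightarrow> (\<lambda>x. cnj (f x)) \<in> borel_measurable M"
  by (erule measurable_compose) (intro borel_measurable_continuous_onI continuous_intros)

section \<open>The Hardy space\<close>

lemma H2_eqI: "(\<And>z. z \<in> disc \<Longrightarrow> f z = g z) \<Longrightarrow> H2_eq f g"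
  by (simp add: H2_eq_def)

lemma H2_eqD: "H2_eq f g \<Longrightarrow> z \<in> disc \<Longrightarrow> f z = g z"
  by (simp add: H2_eq_def)

lemma H2_eq_sym: "H2_eq f g \<Longrightarrow> H2_eq g f"
  by (simp add: H2_eq_def)

lemma H2_eq_trans: "H2_eq f g \<Longrightarrow> H2_eq g h \<Longrightarrow> H2_eq f h"
  by (simp add: H2_eq_def)

lemma taylor_coeff_cong:
  assumes "H2_eq f g"
  shows "taylor_coeff f n = taylor_coeff g n"
proof -
  have "eventually (\<lambda>z. z \<in> disc) (nhds 0)"
    by (rule eventually_nhds_in_open) (auto simp: disc_def)
  then have "eventually (\<lambda>z. f z = g z) (nhds 0)"
    by eventually_elim (use assms in \<open>simp add: H2_eq_def\<close>)
  then show ?thesis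
    by (simp add: taylor_coeff_def higher_deriv_cong_ev)
qed

lemma H2_inner_cong: "H2_eq f f' \<Longrightarrow> H2_eq g g' \<Longrightarrow> H2_inner f g = H2_inner f' g'"
  by (simp add: H2_inner_def taylor_coeff_cong)

lemma H2_inner_sums:
  assumes "f \<in> H2" "g \<in> H2"
  shows "(\<lambda>n. taylor_coeff f n * cnj (taylor_coeff g n)) sums H2_inner f g"
proof -
  have squares: "summable (\<lambda>n. (cmod (taylor_coeff f n))\<^sup>2 + (cmod (taylor_coeff g n))\<^sup>2)"
    using assms by (intro summable_add) (auto simp: H2_def)
  have bound: "norm (taylor_coeff f n * cnj (taylor_coeff g n))
      \<le> (cmod (taylor_coeff f n))\<^sup>2 + (cmod (taylor_coeff g n))\<^sup>2" for n
    using norm_mult_le_sum_squares[of "taylor_coeff f n" "cnj (taylor_coeff g n)"] by simp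
  have "summable (\<lambda>n. taylor_coeff f n * cnj (taylor_coeff g n))"
    by (rule summable_comparison_test'[OF squares bound])
  then show ?thesis
    unfolding H2_inner_def by (rule summable_sums)
qed

lemma H2_inner_commute:
  assumes "f \<in> H2" "g \<in> H2"
  shows "H2_inner g f = cnj (H2_inner f g)"
proof -
  have "(\<lambda>n. taylor_coeff g n * cnj (taylor_coeff f n)) sums cnj (H2_inner f g)"
    using sums_cnj[THEN iffD2, OF H2_inner_sums[OF assms]] by (simp add: mult.commute)
  with H2_inner_sums[OF assms(2,1)] show ?thesis
    by (rule sums_unique2)
qed

lemma H2_eq_zero_if_inner_self_zero:
  assumes f: "f \<in> H2" and "H2_inner f f = 0"
  shows "H2_eq f (\<lambda>_. 0)"
proof -
  have "(\<lambda>n. (cmod (taylor_coeff f n))\<^sup>2) sums 0"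
    using sums_Re[OF H2_inner_sums[OF f f]] assms(2) by (simp add: complex_norm_square[symmetric])
  then have coeff: "taylor_coeff f n = 0" for n
    using suminf_eq_zero_iff[of "\<lambda>n. (cmod (taylor_coeff f n))\<^sup>2"] by (simp add: sums_iff)
  show ?thesis
    unfolding H2_eq_def
  proof
    fix z assume z: "z \<in> disc"
    have "(\<lambda>n. (deriv ^^ n) f 0 / fact n * (z - 0) ^ n) sums f z"
      using f z by (intro holomorphic_power_series) (auto simp: H2_def disc_def)
    moreover have "(deriv ^^ n) f 0 / fact n = 0" for n
      using coeff[of n] by (simp add: taylor_coeff_def)
    ultimately show "f z = 0"
      using sums_unique2[OF _ sums_zero] by simp
  qed
qed

lemma kernel_denominator_nonzero:
  assumes "z \<in> disc"
  shows "of_nat n + 1 - of_nat n * z \<noteq> (0::complex)"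
proof
  assume "of_nat n + 1 - of_nat n * z = 0"
  then have "of_nat n * z = of_nat (Suc n)"
    by (auto simp: algebra_simps)
  then have "real (Suc n) = cmod (of_nat n * z)"
    by (metis norm_of_nat)
  also have "\<dots> \<le> real n"
    using assms by (simp add: disc_def norm_mult mult_left_le)
  finally show False
    by simp
qed

lemma gamma_in_disc:
  assumes "z \<in> disc"
  shows "gamma z \<in> disc"
proof -
  have "1 < cmod (2 - z)"
    using assms norm_triangle_ineq2[of 2 z] by (simp add: disc_def)
  then show ?thesis
    by (simp add: disc_def gamma_def norm_divide divide_less_eq)
qed

section \<open>Square integrable functions on the unit interval\<close>

abbreviation lebesgue01 :: "real measure" where
  "lebesgue01 \<equiv> lebesgue_on {0..1}"

lemma finite_measure_lebesgue01: "finite_measure lebesgue01"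
  by (rule finite_measure_lebesgue_on) simp

lemma borel_measurable_lebesgue01_ident [measurable]: "(\<lambda>x. x) \<in> borel_measurable lebesgue01"
  by (rule continuous_imp_measurable_on_sets_lebesgue) (auto intro: continuous_intros)

lemma AE_lebesgue01_nonzero: "AE x in lebesgue01. x \<noteq> 0"
proof -
  have "{0::real} \<in> null_sets lebesgue01"
    using negligible_iff_null_sets[of "{0::real}"] by (subst null_sets_restrict_space) auto
  then show ?thesis
    by (rule AE_mp[OF AE_not_in]) auto
qed

lemma integrable_mult_bounded_continuous:
  fixes e g :: "real \<Rightarrow> complex"
  assumes e: "integrable lebesgue01 e" and g: "continuous_on {0..1} g"
    and bound: "\<And>x. x \<in> {0..1} \<Longrightarrow> norm (g x) \<le> 1"
  shows "integrable lebesgue01 (\<lambda>x. e x * g x)"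
proof (rule Bochner_Integration.integrable_bound[OF e])
  have [measurable]: "e \<in> borel_measurable lebesgue01" "g \<in> borel_measurable lebesgue01"
    using e g by (auto intro: continuous_imp_measurable_on_sets_lebesgue)
  show "(\<lambda>x. e x * g x) \<in> borel_measurable lebesgue01"
    by measurable
  show "AE x in lebesgue01. norm (e x * g x) \<le> norm (e x)"
    using bound by (intro AE_I2) (simp add: norm_mult mult_left_le)
qed

lemma integrable_mult_x:
  fixes f :: "real \<Rightarrow> complex"
  shows "integrable lebesgue01 f \<Longrightarrow> integrable lebesgue01 (\<lambda>x. of_real x * f x)"
  using integrable_mult_bounded_continuous[of f "\<lambda>x. of_real x"]
  by (auto intro: continuous_intros simp: mult.commute)

lemma L2_integrable:
  assumes "f \<in> L2"
  shows "integrable lebesgue01 f"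
proof (rule Bochner_Integration.integrable_bound)
  show "integrable lebesgue01 (\<lambda>x. (cmod (f x))\<^sup>2 + 1)"
    using assms finite_measure.integrable_const[OF finite_measure_lebesgue01]
    by (auto simp: L2_def)
  show "f \<in> borel_measurable lebesgue01"
    using assms by (simp add: L2_def)
  show "AE x in lebesgue01. norm (f x) \<le> norm ((cmod (f x))\<^sup>2 + 1)"
    using norm_mult_le_sum_squares[of "f _" 1] by (intro AE_I2) simp
qed

lemma L2_inner_integrable:
  assumes f: "f \<in> L2" and g: "g \<in> L2"
  shows "integrable lebesgue01 (\<lambda>x. f x * cnj (g x))"
proof (rule Bochner_Integration.integrable_bound)
  show "integrable lebesgue01 (\<lambda>x. (cmod (f x))\<^sup>2 + (cmod (g x))\<^sup>2)"
    using assms by (auto simp: L2_def)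
  show "(\<lambda>x. f x * cnj (g x)) \<in> borel_measurable lebesgue01"
    using assms by (auto simp: L2_def)
  show "AE x in lebesgue01. norm (f x * cnj (g x)) \<le> norm ((cmod (f x))\<^sup>2 + (cmod (g x))\<^sup>2)"
    using norm_mult_le_sum_squares[of "f _" "cnj (g _)"] by (intro AE_I2) simp
qed

lemma L2_inner_commute: "L2_inner g f = cnj (L2_inner f g)"
  unfolding L2_inner_def by (subst Bochner_Integration.integral_cnj[symmetric]) (simp add: mult.commute)

lemma L2_lincomb:
  assumes f: "f \<in> L2" and g: "g \<in> L2"
  shows "(\<lambda>x. a * f x + b * g x) \<in> L2"
proof -
  have [measurable]: "f \<in> borel_measurable lebesgue01" "g \<in> borel_measurable lebesgue01"
    using assms by (auto simp: L2_def)
  have bound: "(cmod (a * f x + b * g x))\<^sup>2 \<le> 2 * (cmod a)\<^sup>2 * (cmod (f x))\<^sup>2 + 2 * (cmod b)\<^sup>2 * (cmod (g x))\<^sup>2"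
    for x
  proof -
    have "(cmod (a * f x + b * g x))\<^sup>2 \<le> (cmod (a * f x) + cmod (b * g x))\<^sup>2"
      by (intro power_mono norm_triangle_ineq) simp
    also have "\<dots> \<le> 2 * (cmod (a * f x))\<^sup>2 + 2 * (cmod (b * g x))\<^sup>2"
      using sum_squares_bound[of "cmod (a * f x)" "cmod (b * g x)"] by (simp add: power2_sum)
    finally show ?thesis
      by (simp add: norm_mult power_mult_distrib)
  qed
  have "integrable lebesgue01 (\<lambda>x. 2 * (cmod a)\<^sup>2 * (cmod (f x))\<^sup>2 + 2 * (cmod b)\<^sup>2 * (cmod (g x))\<^sup>2)"
    using assms unfolding L2_def
    by (intro Bochner_Integration.integrable_add Bochner_Integration.integrable_mult_right) simp_all
  then have "integrable lebesgue01 (\<lambda>x. (cmod (a * f x + b * g x))\<^sup>2)"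
    by (rule Bochner_Integration.integrable_bound) (use bound in \<open>auto intro!: AE_I2\<close>)
  then show ?thesis
    by (simp add: L2_def)
qed

lemma L2_diff: "f \<in> L2 \<Longrightarrow> g \<in> L2 \<Longrightarrow> (\<lambda>x. f x - g x) \<in> L2"
  using L2_lincomb[of f g 1 "-1"] by simp

definition monomial :: "nat \<Rightarrow> real \<Rightarrow> complex" where
  "monomial n x = complex_of_real (x ^ n)"

lemma cnj_monomial [simp]: "cnj (monomial n x) = monomial n x"
  by (simp add: monomial_def)

lemma monomial_L2: "monomial n \<in> L2"
proof -
  have "continuous_on {0..1} (monomial n)" "continuous_on {0..1} (\<lambda>x. (cmod (monomial n x))\<^sup>2)"
    unfolding monomial_def by (intro continuous_intros)+
  then show ?thesis
    unfolding L2_def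
    by (auto intro: continuous_imp_integrable_real continuous_imp_measurable_on_sets_lebesgue)
qed

lemma borel_measurable_monomial [measurable]: "monomial n \<in> borel_measurable lebesgue01"
  using monomial_L2 by (simp add: L2_def)

lemma L2_inner_lincomb_right:
  assumes "f \<in> L2" "p \<in> L2" "q \<in> L2"
  shows "L2_inner f (\<lambda>x. a * p x + b * q x) = cnj a * L2_inner f p + cnj b * L2_inner f q"
proof -
  have "L2_inner f (\<lambda>x. a * p x + b * q x)
      = integral\<^sup>L lebesgue01 (\<lambda>x. cnj a * (f x * cnj (p x)) + cnj b * (f x * cnj (q x)))"
    unfolding L2_inner_def by (simp add: algebra_simps)
  also have "\<dots> = cnj a * L2_inner f p + cnj b * L2_inner f q"
    using assms by (simp add: L2_inner_def L2_inner_integrable)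
  finally show ?thesis .
qed

definition moment :: "(real \<Rightarrow> complex) \<Rightarrow> nat \<Rightarrow> complex" where
  "moment f n = L2_inner f (monomial n)"

lemma moment_eq_integral: "moment f n = integral\<^sup>L lebesgue01 (\<lambda>x. f x * monomial n x)"
  by (simp add: moment_def L2_inner_def)

lemma integrable_mult_monomial:
  "integrable lebesgue01 f \<Longrightarrow> integrable lebesgue01 (\<lambda>x. f x * monomial n x)"
  by (rule integrable_mult_bounded_continuous)
    (auto intro!: continuous_intros simp: monomial_def norm_power power_le_one)

lemma moment_diff:
  "integrable lebesgue01 f \<Longrightarrow> integrable lebesgue01 g
    \<Longrightarrow> moment (\<lambda>x. f x - g x) n = moment f n - moment g n"
  unfolding moment_eq_integral left_diff_distrib
  by (intro Bochner_Integration.integral_diff integrable_mult_monomial)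

lemma moment_mult_x: "moment (\<lambda>x. of_real x * f x) n = moment f (Suc n)"
  by (simp add: moment_eq_integral monomial_def mult_ac)

lemma continuous_on_volterra: "integrable lebesgue01 f \<Longrightarrow> continuous_on {0..1} (volterra f)"
  unfolding volterra_def by (rule indefinite_integral_continuous_real)

lemma borel_measurable_volterra:
  "integrable lebesgue01 f \<Longrightarrow> volterra f \<in> borel_measurable lebesgue01"
  by (rule continuous_imp_measurable_on_sets_lebesgue[OF continuous_on_volterra]) simp_all

lemma integrable_volterra: "integrable lebesgue01 f \<Longrightarrow> integrable lebesgue01 (volterra f)"
  by (rule continuous_imp_integrable_real[OF continuous_on_volterra])

lemma integral_power_from:
  assumes "t \<in> {0..1}"
  shows "integral\<^sup>L lebesgue01 (\<lambda>x. if t \<le> x then x ^ n else 0) = (1 - t ^ Suc n) / Suc n"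
proof -
  have "integral\<^sup>L lebesgue01 (\<lambda>x. if t \<le> x then x ^ n else 0)
      = integral\<^sup>L lborel (\<lambda>x. x ^ n * indicator {t..1} x)"
    using assms
    by (subst integral_restrict_space, simp, subst integral_completion[symmetric], simp)
      (auto intro!: Bochner_Integration.integral_cong simp: indicator_def)
  also have "\<dots> = (1 - t ^ Suc n) / Suc n"
    using assms by (simp add: integral_power)
  finally show ?thesis .
qed

lemma integrable_volterra_kernel:
  fixes e :: "real \<Rightarrow> complex"
  assumes e: "integrable lebesgue01 e"
  shows "integrable (lebesgue01 \<Otimes>\<^sub>M lebesgue01) (\<lambda>(x, t). if t \<le> x then e t * monomial n x else 0)"
proof -
  interpret pair_sigma_finite lebesgue01 lebesgue01
    using finite_measure_lebesgue01 by (simp add: pair_sigma_finite_def finite_measure.axioms(1))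
  have [measurable]: "e \<in> borel_measurable lebesgue01"
    using e by (rule borel_measurable_integrable)
  have "integrable (lebesgue01 \<Otimes>\<^sub>M lebesgue01) (\<lambda>(x, t). norm (e t))"
    using e finite_measure.integrable_const[OF finite_measure_lebesgue01]
    by (intro Fubini_integrable) auto
  then show ?thesis
  proof (rule Bochner_Integration.integrable_bound)
    show "(\<lambda>(x, t). if t \<le> x then e t * monomial n x else 0) \<in> borel_measurable (lebesgue01 \<Otimes>\<^sub>M lebesgue01)"
      by measurable
    show "AE p in lebesgue01 \<Otimes>\<^sub>M lebesgue01.
        norm (case p of (x, t) \<Rightarrow> if t \<le> x then e t * monomial n x else 0) \<le> norm (case p of (x, t) \<Rightarrow> norm (e t))"
      by (intro AE_I2)
        (auto simp: monomial_def space_pair_measure norm_mult norm_power power_le_one mult_left_le)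
  qed
qed

lemma moment_volterra:
  fixes e :: "real \<Rightarrow> complex"
  assumes e: "integrable lebesgue01 e"
  shows "moment (volterra e) n = (moment e 0 - moment e (Suc n)) / (of_nat n + 1)"
proof -
  interpret pair_sigma_finite lebesgue01 lebesgue01
    using finite_measure_lebesgue01 by (simp add: pair_sigma_finite_def finite_measure.axioms(1))
  define G where "G = (\<lambda>(x, t). if t \<le> x then e t * monomial n x else 0)"
  have G: "integrable (lebesgue01 \<Otimes>\<^sub>M lebesgue01) G"
    unfolding G_def by (rule integrable_volterra_kernel[OF e])
  have inner_t: "(\<integral>t. G (x, t) \<partial>lebesgue01) = volterra e x * monomial n x" if "x \<in> {0..1}" for x
  proof -
    have "(\<integral>t. G (x, t) \<partial>lebesgue01) = (\<integral>t. (indicator {0..x} t *\<^sub>R e t) * monomial n x \<partial>lebesgue01)"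
      by (auto simp: G_def indicator_def intro!: Bochner_Integration.integral_cong)
    also have "\<dots> = (\<integral>t. indicator {0..x} t *\<^sub>R e t \<partial>lebesgue01) * monomial n x"
      by (rule integral_mult_left_zero)
    also have "(\<integral>t. indicator {0..x} t *\<^sub>R e t \<partial>lebesgue01) = volterra e x"
      using that unfolding volterra_def
      by (subst (1 2) integral_restrict_space) (auto intro!: Bochner_Integration.integral_cong simp: indicator_def)
    finally show ?thesis .
  qed
  have inner_x: "(\<integral>x. G (x, t) \<partial>lebesgue01) = (e t * monomial 0 t - e t * monomial (Suc n) t) / (of_nat n + 1)"
    if "t \<in> {0..1}" for t
  proof -
    have "(\<integral>x. G (x, t) \<partial>lebesgue01) = (\<integral>x. e t * of_real (if t \<le> x then x ^ n else 0) \<partial>lebesgue01)"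
      by (rule Bochner_Integration.integral_cong) (auto simp: G_def monomial_def)
    also have "\<dots> = e t * of_real (\<integral>x. (if t \<le> x then x ^ n else 0) \<partial>lebesgue01)"
      by (simp only: integral_mult_right_zero integral_complex_of_real)
    finally show ?thesis
      using that by (simp add: integral_power_from monomial_def field_simps)
  qed
  have "moment (volterra e) n = (\<integral>x. \<integral>t. G (x, t) \<partial>lebesgue01 \<partial>lebesgue01)"
    unfolding moment_eq_integral by (intro Bochner_Integration.integral_cong) (auto simp: inner_t)
  also have "\<dots> = (\<integral>t. \<integral>x. G (x, t) \<partial>lebesgue01 \<partial>lebesgue01)"
    using Fubini_integral[of "\<lambda>x t. G (x, t)"] G by simp
  also have "\<dots> = (\<integral>t. (e t * monomial 0 t - e t * monomial (Suc n) t) / (of_nat n + 1) \<partial>lebesgue01)"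
    by (intro Bochner_Integration.integral_cong) (auto simp: inner_x)
  also have "\<dots> = (moment e 0 - moment e (Suc n)) / (of_nat n + 1)"
    unfolding moment_eq_integral using integrable_mult_monomial[OF e]
    by (simp only: integral_divide_zero Bochner_Integration.integral_diff)
  finally show ?thesis .
qed

section \<open>Functions with vanishing moments\<close>

lemma set_integral_UNIV_zero_if_integrals_atMost_zero:
  fixes E :: "real \<Rightarrow> 'a::{banach, second_countable_topology}"
  assumes E: "integrable lebesgue E"
    and zero: "\<And>y. set_lebesgue_integral lebesgue {..y} E = 0"
  shows "set_lebesgue_integral lebesgue UNIV E = 0"
proof -
  have "(\<Union>i. {..real i}) = UNIV"
    by (auto intro: real_arch_simple)
  moreover have "(\<lambda>i. set_lebesgue_integral lebesgue {..real i} E)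
      \<longlonglongrightarrow> set_lebesgue_integral lebesgue (\<Union>i. {..real i}) E"
    using E calculation by (intro set_integral_cont_up) (auto simp: incseq_def set_integrable_def)
  ultimately show ?thesis
    using zero by (simp add: LIMSEQ_const_iff)
qed

lemma set_integral_borel_zero_if_integrals_atMost_zero:
  fixes E :: "real \<Rightarrow> 'a::{banach, second_countable_topology}"
  assumes E: "integrable lebesgue E"
    and zero: "\<And>y. set_lebesgue_integral lebesgue {..y} E = 0"
    and "A \<in> sets borel"
  shows "set_lebesgue_integral lebesgue A E = 0"
proof -
  have in_lebesgue: "B \<in> sets lebesgue" if "B \<in> sigma_sets UNIV (range atMost)" for B :: "real set"
    using that by (simp add: borel_eq_atMost sets_measure_of)
  have "Int_stable (range (atMost :: real \<Rightarrow> real set))"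
    by (auto simp: Int_stable_def intro: exI[of _ "min _ _"])
  moreover have "range atMost \<subseteq> Pow (UNIV :: real set)"
    by simp
  moreover have "A \<in> sigma_sets UNIV (range atMost)"
    using \<open>A \<in> sets borel\<close> by (simp add: borel_eq_atMost sets_measure_of)
  ultimately show ?thesis
  proof (induction rule: sigma_sets_induct_disjoint)
    case (compl A)
    have "indicator (UNIV - A) x *\<^sub>R E x = indicator UNIV x *\<^sub>R E x - indicator A x *\<^sub>R E x" for x
      by (simp add: indicator_def)
    then have "set_lebesgue_integral lebesgue (UNIV - A) E
        = set_lebesgue_integral lebesgue UNIV E - set_lebesgue_integral lebesgue A E"
      unfolding set_lebesgue_integral_def using E in_lebesgue[OF compl.hyps]
      by (simp add: Bochner_Integration.integral_diff integrable_mult_indicator)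
    then show ?case
      using set_integral_UNIV_zero_if_integrals_atMost_zero[OF E zero] compl.IH by simp
  next
    case (union A)
    have A: "A i \<in> sets lebesgue" for i
      using union.hyps(2) in_lebesgue by blast
    have "set_lebesgue_integral lebesgue (\<Union>i. A i) E = (\<Sum>i. set_lebesgue_integral lebesgue (A i) E)"
      using union.hyps(1) E A
      by (intro lebesgue_integral_countable_add)
        (auto simp: disjoint_family_on_def set_integrable_def intro!: integrable_mult_indicator)
    then show ?case
      using union.IH by simp
  qed (use zero in \<open>auto simp: set_lebesgue_integral_def\<close>)
qed

lemma set_integral_zero_if_integrals_atMost_zero:
  fixes E :: "real \<Rightarrow> 'a::{banach, second_countable_topology}"
  assumes E: "integrable lebesgue E"
    and zero: "\<And>y. set_lebesgue_integral lebesgue {..y} E = 0"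
    and "A \<in> sets lebesgue"
  shows "set_lebesgue_integral lebesgue A E = 0"
proof -
  obtain S N N' where A: "A = S \<union> N" "N \<subseteq> N'" "N' \<in> null_sets lborel" "S \<in> sets borel"
    using \<open>A \<in> sets lebesgue\<close> by (auto elim: sets_completionE)
  have S: "S \<in> sets lebesgue"
    using sets_completionI_sets[of S lborel] A(4) by simp
  have "AE x in lebesgue. indicator A x *\<^sub>R E x = indicator S x *\<^sub>R E x"
    using AE_not_in[OF null_sets_completionI[OF A(3)]]
    by eventually_elim (use A(1,2) in \<open>auto simp: indicator_def\<close>)
  then have "set_lebesgue_integral lebesgue A E = set_lebesgue_integral lebesgue S E"
    unfolding set_lebesgue_integral_def
    using E \<open>A \<in> sets lebesgue\<close> S
    by (intro integral_cong_AE) (auto intro: borel_measurable_integrable integrable_mult_indicator)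
  also have "\<dots> = 0"
    using set_integral_borel_zero_if_integrals_atMost_zero[OF E zero A(4)] .
  finally show ?thesis .
qed

lemma AE_zero_if_interval_integrals_zero:
  fixes e :: "real \<Rightarrow> 'a::{banach, second_countable_topology}"
  assumes e: "integrable lebesgue01 e"
    and zero: "\<And>c. c \<in> {0..1} \<Longrightarrow> integral\<^sup>L (lebesgue_on {0..c}) e = 0"
  shows "AE x in lebesgue01. e x = 0"
proof (rule sigma_finite_measure.density_zero[OF finite_measure.axioms(1)[OF finite_measure_lebesgue01] e])
  define E where "E x = indicator {0..1::real} x *\<^sub>R e x" for x
  have E: "integrable lebesgue E"
    using e unfolding E_def by (subst (asm) integrable_restrict_space) simp_all
  have E_atMost: "set_lebesgue_integral lebesgue {..y} E = 0" for y
  proof -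
    have "set_lebesgue_integral lebesgue {..y} E
        = integral\<^sup>L lebesgue (\<lambda>x. indicator {0..min y 1} x *\<^sub>R e x)"
      unfolding set_lebesgue_integral_def E_def
      by (intro Bochner_Integration.integral_cong) (auto simp: indicator_def)
    also have "\<dots> = 0"
      using zero[of "min y 1"] by (cases "0 \<le> y") (simp_all add: integral_restrict_space)
    finally show ?thesis .
  qed
  fix A assume "A \<in> sets lebesgue01"
  then have A: "A \<in> sets lebesgue" "A \<subseteq> {0..1}"
    by (auto simp: sets_restrict_space_iff)
  have "set_lebesgue_integral lebesgue01 A e = set_lebesgue_integral lebesgue A E"
    unfolding set_lebesgue_integral_def E_def using A(2)
    by (subst integral_restrict_space) (auto intro!: Bochner_Integration.integral_cong simp: indicator_def)
  then show "set_lebesgue_integral lebesgue01 A e = 0"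
    using set_integral_zero_if_integrals_atMost_zero[OF E E_atMost A(1)] by simp
qed

lemma integral_mult_polynomial_eq_zero:
  fixes F :: "real \<Rightarrow> complex"
  assumes F: "continuous_on {0..1} F" and moments: "\<And>n. moment F n = 0"
    and p: "polynomial_function p"
  shows "integral\<^sup>L lebesgue01 (\<lambda>x. F x * p x) = 0"
proof -
  have integrable: "integrable lebesgue01 (\<lambda>x. F x * g x)" if "continuous_on {0..1} g" for g
    using F that by (intro continuous_imp_integrable_real continuous_intros)
  have real_poly: "integral\<^sup>L lebesgue01 (\<lambda>x. F x * of_real (q x)) = 0"
    if "real_polynomial_function q" for q
  proof -
    obtain a m where q: "q = (\<lambda>x. \<Sum>i\<le>m. a i * x ^ i)"
      using \<open>real_polynomial_function q\<close> real_polynomial_function_iff_sum by blast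
    have "(\<lambda>x. F x * of_real (q x)) = (\<lambda>x. \<Sum>i\<le>m. of_real (a i) * (F x * monomial i x))"
      by (simp add: q monomial_def sum_distrib_left mult_ac)
    moreover have "integrable lebesgue01 (\<lambda>x. of_real (a i) * (F x * monomial i x))" for i
      unfolding monomial_def by (intro Bochner_Integration.integrable_mult_right integrable continuous_intros)
    ultimately have "integral\<^sup>L lebesgue01 (\<lambda>x. F x * of_real (q x))
        = (\<Sum>i\<le>m. of_real (a i) * integral\<^sup>L lebesgue01 (\<lambda>x. F x * monomial i x))"
      by (simp only: Bochner_Integration.integral_sum integral_mult_right_zero)
    then show ?thesis
      using moments by (simp add: moment_eq_integral)
  qed
  have "real_polynomial_function (\<lambda>x. Re (p x))" "real_polynomial_function (\<lambda>x. Im (p x))"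
    using p bounded_linear_Re bounded_linear_Im by (auto simp: polynomial_function_def o_def)
  moreover have "F x * p x = F x * of_real (Re (p x)) + \<i> * (F x * of_real (Im (p x)))" for x
    by (subst complex_eq[of "p x"]) (simp add: algebra_simps)
  moreover have "continuous_on {0..1} (\<lambda>x. complex_of_real (Re (p x)))"
    "continuous_on {0..1} (\<lambda>x. complex_of_real (Im (p x)))"
    using continuous_on_polymonial_function[OF p] by (auto intro!: continuous_intros)
  ultimately show ?thesis
    by (simp add: integrable real_poly)
qed

lemma integral_norm_square_le_if_moments_zero:
  fixes F :: "real \<Rightarrow> complex"
  assumes F: "continuous_on {0..1} F" and moments: "\<And>n. moment F n = 0" and "\<epsilon> > 0"
  shows "integral\<^sup>L lebesgue01 (\<lambda>x. (cmod (F x))\<^sup>2) \<le> \<epsilon> * integral\<^sup>L lebesgue01 (\<lambda>x. cmod (F x))"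
proof -
  have "continuous_on {0..1} (\<lambda>x. cnj (F x))"
    using F by (intro continuous_intros)
  from Stone_Weierstrass_polynomial_function[OF compact_Icc this \<open>\<epsilon> > 0\<close>]
  obtain p where p: "polynomial_function p" "\<forall>x\<in>{0..1}. norm (cnj (F x) - p x) < \<epsilon>"
    by blast
  have "continuous_on {0..1} p"
    using p(1) by (rule continuous_on_polymonial_function)
  note continuous = F this
  have integrable: "integrable lebesgue01 (\<lambda>x. F x * (cnj (F x) - p x))"
    "integrable lebesgue01 (\<lambda>x. F x * cnj (F x))" "integrable lebesgue01 (\<lambda>x. F x * p x)"
    by (intro continuous_imp_integrable_real continuous_intros continuous)+
  have "of_real (integral\<^sup>L lebesgue01 (\<lambda>x. (cmod (F x))\<^sup>2)) = integral\<^sup>L lebesgue01 (\<lambda>x. F x * cnj (F x))"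
    unfolding integral_complex_of_real[symmetric] complex_norm_square ..
  also have "\<dots> = integral\<^sup>L lebesgue01 (\<lambda>x. F x * cnj (F x)) - integral\<^sup>L lebesgue01 (\<lambda>x. F x * p x)"
    using integral_mult_polynomial_eq_zero[OF F moments p(1)] by simp
  also have "\<dots> = integral\<^sup>L lebesgue01 (\<lambda>x. F x * (cnj (F x) - p x))"
    using integrable(2,3) by (simp add: right_diff_distrib)
  finally have eq: "of_real (integral\<^sup>L lebesgue01 (\<lambda>x. (cmod (F x))\<^sup>2))
      = integral\<^sup>L lebesgue01 (\<lambda>x. F x * (cnj (F x) - p x))" .
  have "integral\<^sup>L lebesgue01 (\<lambda>x. (cmod (F x))\<^sup>2) = norm (integral\<^sup>L lebesgue01 (\<lambda>x. F x * (cnj (F x) - p x)))"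
    unfolding eq[symmetric] by (simp add: Bochner_Integration.integral_nonneg)
  also have "\<dots> \<le> integral\<^sup>L lebesgue01 (\<lambda>x. cmod (F x) * \<epsilon>)"
  proof (rule Bochner_Integration.integral_norm_bound_integral[OF integrable(1)])
    show "integrable lebesgue01 (\<lambda>x. cmod (F x) * \<epsilon>)"
      using F by (intro continuous_imp_integrable_real continuous_intros)
    show "norm (F x * (cnj (F x) - p x)) \<le> cmod (F x) * \<epsilon>" if "x \<in> space lebesgue01" for x
      using p(2) that by (simp add: norm_mult mult_left_mono less_imp_le)
  qed
  also have "\<dots> = \<epsilon> * integral\<^sup>L lebesgue01 (\<lambda>x. cmod (F x))"
    by (simp add: mult.commute)
  finally show ?thesis .
qed

lemma continuous_eq_zero_if_moments_zero:
  fixes F :: "real \<Rightarrow> complex"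
  assumes F: "continuous_on {0..1} F" and moments: "\<And>n. moment F n = 0"
  shows "\<forall>x\<in>{0..1}. F x = 0"
proof -
  define I where "I = integral\<^sup>L lebesgue01 (\<lambda>x. (cmod (F x))\<^sup>2)"
  define C where "C = integral\<^sup>L lebesgue01 (\<lambda>x. cmod (F x))"
  have "I \<ge> 0" "C \<ge> 0"
    unfolding I_def C_def by (simp_all add: Bochner_Integration.integral_nonneg)
  have "I \<le> 0"
  proof (rule field_le_epsilon)
    fix e :: real assume "e > 0"
    then have "e / (C + 1) > 0"
      using \<open>C \<ge> 0\<close> by simp
    then have "I \<le> e / (C + 1) * C"
      unfolding I_def C_def by (rule integral_norm_square_le_if_moments_zero[OF F moments])
    also have "\<dots> \<le> e"
      using \<open>e > 0\<close> \<open>C \<ge> 0\<close> by (simp add: field_simps)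
    finally show "I \<le> 0 + e" by simp
  qed
  then have "I = 0"
    using \<open>I \<ge> 0\<close> by simp
  moreover have "continuous_on {0..1} (\<lambda>x. (cmod (F x))\<^sup>2)"
    using F by (intro continuous_intros)
  ultimately show ?thesis
    using integralL_eq_0_iff[of 0 1 "\<lambda>x. (cmod (F x))\<^sup>2"] by (simp add: I_def)
qed

lemma AE_zero_if_moments_zero:
  fixes e :: "real \<Rightarrow> complex"
  assumes e: "integrable lebesgue01 e" and moments: "\<And>n. moment e n = 0"
  shows "AE x in lebesgue01. e x = 0"
proof (rule AE_zero_if_interval_integrals_zero[OF e])
  have "\<forall>x\<in>{0..1}. volterra e x = 0"
    using continuous_on_volterra[OF e] moment_volterra[OF e] moments
    by (intro continuous_eq_zero_if_moments_zero) simp_all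
  then show "integral\<^sup>L (lebesgue_on {0..c}) e = 0" if "c \<in> {0..1}" for c
    using that by (simp add: volterra_def)
qed

lemma AE_zero_if_positive_moments_zero:
  fixes e :: "real \<Rightarrow> complex"
  assumes e: "integrable lebesgue01 e" and moments: "\<And>n. n \<ge> 1 \<Longrightarrow> moment e n = 0"
  shows "AE x in lebesgue01. e x = 0"
proof -
  have "AE x in lebesgue01. of_real x * e x = 0"
    using integrable_mult_x[OF e] moments by (intro AE_zero_if_moments_zero) (simp_all add: moment_mult_x)
  then show ?thesis
    using AE_lebesgue01_nonzero
    by eventually_elim simp
qed

section \<open>The Sarason transform\<close>

context
  fixes U :: "(real \<Rightarrow> complex) \<Rightarrow> (complex \<Rightarrow> complex)"
  assumes U: "sarason_transform U"
begin

lemma U_in_H2: "f \<in> L2 \<Longrightarrow> U f \<in> H2"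
  using U by (simp add: sarason_transform_def)

lemma U_lincomb:
  "f \<in> L2 \<Longrightarrow> g \<in> L2 \<Longrightarrow> H2_eq (U (\<lambda>x. a * f x + b * g x)) (\<lambda>z. a * U f z + b * U g z)"
  using U by (simp add: sarason_transform_def)

lemma U_diff: "f \<in> L2 \<Longrightarrow> g \<in> L2 \<Longrightarrow> H2_eq (U (\<lambda>x. f x - g x)) (\<lambda>z. U f z - U g z)"
  using U_lincomb[of f g 1 "-1"] by simp

lemma U_inner: "f \<in> L2 \<Longrightarrow> g \<in> L2 \<Longrightarrow> H2_inner (U f) (U g) = L2_inner f g"
  using U by (simp add: sarason_transform_def)

lemma U_surj:
  assumes "h \<in> H2"
  obtains f where "f \<in> L2" "H2_eq (U f) h"
  using U assms by (auto simp: sarason_transform_def)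

lemma U_monomial:
  assumes z: "z \<in> disc"
  shows "U (monomial n) z = 1 / (of_nat n + 1 - of_nat n * z)"
proof -
  have "of_nat (Suc n) \<noteq> (0::complex)"
    by (rule of_nat_neq_0)
  then have "1 - cnj (of_real (real n / real (n + 1))) * z = (of_nat n + 1 - of_nat n * z) / (of_nat n + 1)"
    by (simp add: field_simps)
  moreover have "U (monomial n) z = (1 / of_nat (n + 1)) * kernel (of_real (real n / real (n + 1))) z"
    using U z unfolding sarason_transform_def H2_eq_def monomial_def[abs_def] by blast
  ultimately show ?thesis
    using \<open>of_nat (Suc n) \<noteq> (0::complex)\<close> by (simp add: kernel_def add.commute)
qed

lemma U_monomial_0: "z \<in> disc \<Longrightarrow> U (monomial 0) z = 1"
  using U_monomial[of z 0] by simp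

lemma shift_U_monomial:
  assumes "n \<ge> 1"
  shows "H2_eq (shift (U (monomial n)))
    (U (\<lambda>x. ((of_nat n + 1) / of_nat n) * monomial n x + (-1 / of_nat n) * monomial 0 x))"
    (is "H2_eq ?S (U ?r)")
proof (rule H2_eqI)
  fix z assume z: "z \<in> disc"
  have identity: "((c + 1) / c) * (1 / (c + 1 - c * z)) + (-1 / c) * 1 = z * (1 / (c + 1 - c * z))"
    if "c \<noteq> 0" "c + 1 - c * z \<noteq> 0" for c :: complex
    using that by (simp add: divide_simps)
  have "U ?r z = ((of_nat n + 1) / of_nat n) * U (monomial n) z + (-1 / of_nat n) * U (monomial 0) z"
    using U_lincomb[OF monomial_L2 monomial_L2] z by (rule H2_eqD)
  also have "\<dots> = ?S z"
    unfolding U_monomial_0[OF z] unfolding U_monomial[OF z] shift_def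
    using assms kernel_denominator_nonzero[OF z] by (intro identity) simp_all
  finally show "?S z = U ?r z"
    by (rule sym)
qed

lemma comp_gamma_U_monomial:
  "H2_eq (comp_gamma (U (monomial n)))
    (U (\<lambda>x. (1 / (of_nat n + 1)) * monomial 0 x + (of_nat n / (of_nat n + 1)) * monomial (Suc n) x))"
  (is "H2_eq ?C (U ?r)")
proof (rule H2_eqI)
  fix z assume z: "z \<in> disc"
  have "2 - z \<noteq> 0"
    using z by (auto simp: disc_def)
  have identity: "(1 / (c + 1)) * 1 + (c / (c + 1)) * (1 / ((c + 1) + 1 - (c + 1) * z))
      = 1 / (c + 1 - c * (1 / (2 - z)))"
    if "c + 1 \<noteq> 0" "(c + 1) + 1 - (c + 1) * z \<noteq> 0" "c + 1 - c * (1 / (2 - z)) \<noteq> 0" for c :: complex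
    using that \<open>2 - z \<noteq> 0\<close> by (simp add: divide_simps) (simp add: algebra_simps)
  have U_Suc: "U (monomial (Suc n)) z = 1 / ((of_nat n + 1) + 1 - (of_nat n + 1) * z)"
    using U_monomial[OF z, of "Suc n"] by (simp add: add_ac)
  have "U ?r z = (1 / (of_nat n + 1)) * U (monomial 0) z + (of_nat n / (of_nat n + 1)) * U (monomial (Suc n)) z"
    using U_lincomb[OF monomial_L2 monomial_L2] z by (rule H2_eqD)
  also have "\<dots> = 1 / (of_nat n + 1 - of_nat n * (1 / (2 - z)))"
    unfolding U_monomial_0[OF z] U_Suc
  proof (rule identity)
    show "of_nat n + 1 \<noteq> (0::complex)"
      by simp
    show "(of_nat n + 1) + 1 - (of_nat n + 1) * z \<noteq> 0"
      using kernel_denominator_nonzero[OF z, of "Suc n"] by (simp add: add_ac)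
    show "of_nat n + 1 - of_nat n * (1 / (2 - z)) \<noteq> 0"
      using kernel_denominator_nonzero[OF gamma_in_disc[OF z], of n] by (simp add: gamma_def)
  qed
  also have "\<dots> = ?C z"
    unfolding comp_gamma_def o_def U_monomial[OF gamma_in_disc[OF z]] by (simp only: gamma_def)
  finally show "?C z = U ?r z"
    by (rule sym)
qed

lemma moment_of_adjoint_preimage:
  assumes B: "H2_adjoint_of B T" and w: "w \<in> H2"
    and c: "c \<in> L2" "H2_eq (U c) w" and y: "y \<in> L2" "H2_eq (U y) (B w)"
    and r: "r \<in> L2" "H2_eq (T (U (monomial n))) (U r)"
  shows "moment y n = L2_inner c r"
proof -
  have Un: "U (monomial n) \<in> H2"
    by (rule U_in_H2[OF monomial_L2])
  have Bw: "B w \<in> H2"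
    using B w by (simp add: H2_adjoint_of_def)
  have "moment y n = H2_inner (B w) (U (monomial n))"
    unfolding moment_def using U_inner[OF y(1) monomial_L2] H2_inner_cong[OF y(2), of "U (monomial n)"]
    by (simp add: H2_eq_def)
  also have "\<dots> = cnj (H2_inner (U (monomial n)) (B w))"
    by (rule H2_inner_commute[OF Un Bw])
  also have "H2_inner (U (monomial n)) (B w) = H2_inner (T (U (monomial n))) w"
    using B Un w by (simp add: H2_adjoint_of_def)
  also have "\<dots> = H2_inner (U r) (U c)"
    using r(2) c(2) by (simp add: H2_inner_cong H2_eq_sym)
  also have "\<dots> = cnj (L2_inner c r)"
    using U_inner[OF r(1) c(1)] L2_inner_commute[of r c] by simp
  finally show ?thesis
    by simp
qed

lemma moment_of_shift_adjoint_preimage: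
  assumes S: "H2_adjoint_of Sstar shift" and w: "w \<in> H2"
    and c: "c \<in> L2" "H2_eq (U c) w" and y: "y \<in> L2" "H2_eq (U y) (Sstar w)" and n: "n \<ge> 1"
  shows "moment y n = ((of_nat n + 1) * moment c n - moment c 0) / of_nat n"
proof -
  define r where "r x = ((of_nat n + 1) / of_nat n) * monomial n x + (-1 / of_nat n) * monomial 0 x" for x
  have r: "r \<in> L2" "H2_eq (shift (U (monomial n))) (U r)"
    unfolding r_def[abs_def] by (rule L2_lincomb[OF monomial_L2 monomial_L2] shift_U_monomial[OF n])+
  have "moment y n = L2_inner c r"
    by (rule moment_of_adjoint_preimage[of Sstar shift w c y r n, OF S w c y r])
  also have "\<dots> = ((of_nat n + 1) * moment c n - moment c 0) / of_nat n"
    unfolding r_def[abs_def] L2_inner_lincomb_right[OF c(1) monomial_L2 monomial_L2] moment_def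
    by (simp add: diff_divide_distrib)
  finally show ?thesis .
qed

lemma moment_of_comp_gamma_adjoint_preimage:
  assumes C: "H2_adjoint_of Cstar comp_gamma" and w: "w \<in> H2"
    and c: "c \<in> L2" "H2_eq (U c) w" and y: "y \<in> L2" "H2_eq (U y) (Cstar w)"
  shows "moment y n = (moment c 0 + of_nat n * moment c (Suc n)) / (of_nat n + 1)"
proof -
  define r where "r x = (1 / (of_nat n + 1)) * monomial 0 x + (of_nat n / (of_nat n + 1)) * monomial (Suc n) x" for x
  have r: "r \<in> L2" "H2_eq (comp_gamma (U (monomial n))) (U r)"
    unfolding r_def[abs_def] by (rule L2_lincomb[OF monomial_L2 monomial_L2] comp_gamma_U_monomial)+
  have "moment y n = L2_inner c r"
    by (rule moment_of_adjoint_preimage[of Cstar comp_gamma w c y r n, OF C w c y r])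
  also have "\<dots> = (moment c 0 + of_nat n * moment c (Suc n)) / (of_nat n + 1)"
    unfolding r_def[abs_def] L2_inner_lincomb_right[OF c(1) monomial_L2 monomial_L2] moment_def
    by (simp add: add_divide_distrib)
  finally show ?thesis .
qed

lemma one_minus_shift_adjoint_preimage:
  assumes S: "H2_adjoint_of Sstar shift" and w: "w \<in> H2" and c: "c \<in> L2" "H2_eq (U c) w"
  obtains h where "h \<in> L2" "H2_eq (U h) (\<lambda>z. w z - Sstar w z)"
    "\<And>n. n \<ge> 1 \<Longrightarrow> moment h n = (moment c 0 - moment c n) / of_nat n"
proof -
  have "Sstar w \<in> H2"
    using S w by (simp add: H2_adjoint_of_def)
  then obtain s where s: "s \<in> L2" "H2_eq (U s) (Sstar w)"
    by (rule U_surj)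
  show ?thesis
  proof
    show "(\<lambda>x. c x - s x) \<in> L2"
      by (rule L2_diff[OF c(1) s(1)])
    show "H2_eq (U (\<lambda>x. c x - s x)) (\<lambda>z. w z - Sstar w z)"
      using U_diff[OF c(1) s(1)] c(2) s(2) by (simp add: H2_eq_def)
    fix n :: nat assume n: "n \<ge> 1"
    have "moment (\<lambda>x. c x - s x) n = moment c n - ((of_nat n + 1) * moment c n - moment c 0) / of_nat n"
      using moment_of_shift_adjoint_preimage[of Sstar w c s n, OF S w c s n]
        moment_diff[OF L2_integrable[OF c(1)] L2_integrable[OF s(1)]]
      by simp
    also have "\<dots> = (moment c 0 - moment c n) / of_nat n"
      using n by (simp add: field_simps)
    finally show "moment (\<lambda>x. c x - s x) n = (moment c 0 - moment c n) / of_nat n" .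
  qed
qed

lemma U_eq_if_AE_eq:
  assumes h: "h \<in> L2" and u: "u \<in> borel_measurable lebesgue01" and eq: "AE x in lebesgue01. u x = h x"
  shows "H2_eq (U u) (U h)"
proof -
  have "integrable lebesgue01 (\<lambda>x. (cmod (u x))\<^sup>2) \<longleftrightarrow> integrable lebesgue01 (\<lambda>x. (cmod (h x))\<^sup>2)"
    using u h eq by (intro integrable_cong_AE) (auto simp: L2_def elim: AE_mp)
  then have u_L2: "u \<in> L2"
    using u h by (simp add: L2_def)
  have "AE x in lebesgue01. (u x - h x) * cnj (u x - h x) = 0"
    using eq by eventually_elim simp
  then have "H2_inner (U (\<lambda>x. u x - h x)) (U (\<lambda>x. u x - h x)) = 0"
    using U_inner[OF L2_diff[OF u_L2 h] L2_diff[OF u_L2 h]] by (simp add: L2_inner_def integral_eq_zero_AE)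
  then have "H2_eq (U (\<lambda>x. u x - h x)) (\<lambda>_. 0)"
    by (rule H2_eq_zero_if_inner_self_zero[OF U_in_H2[OF L2_diff[OF u_L2 h]]])
  then show ?thesis
    using U_diff[OF u_L2 h] by (simp add: H2_eq_def)
qed

lemma U_eq_if_positive_moments_eq:
  assumes h: "h \<in> L2" and u: "integrable lebesgue01 u"
    and moments: "\<And>n. n \<ge> 1 \<Longrightarrow> moment u n = moment h n"
  shows "H2_eq (U u) (U h)"
proof (rule U_eq_if_AE_eq[OF h borel_measurable_integrable[OF u]])
  have "AE x in lebesgue01. u x - h x = 0"
    using u L2_integrable[OF h] moments
    by (intro AE_zero_if_positive_moments_zero) (simp_all add: moment_diff)
  then show "AE x in lebesgue01. u x = h x"
    by eventually_elim simp
qed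

lemma conj_eq_hardy_op:
  assumes S: "H2_adjoint_of Sstar shift"
  shows "conj_eq U hardy_op (\<lambda>g z. g z - Sstar g z)"
  unfolding conj_eq_def
proof (intro ballI impI)
  fix g f assume g: "g \<in> H2" and f: "f \<in> L2" and fg: "H2_eq (U f) g"
  obtain h where h: "h \<in> L2" "H2_eq (U h) (\<lambda>z. g z - Sstar g z)"
    "\<And>n. n \<ge> 1 \<Longrightarrow> moment h n = (moment f 0 - moment f n) / of_nat n"
    using one_minus_shift_adjoint_preimage[of Sstar g f, OF S g f fg] by blast
  have f_int: "integrable lebesgue01 f"
    by (rule L2_integrable[OF f])
  have xh_int: "integrable lebesgue01 (\<lambda>x. of_real x * h x)"
    by (rule integrable_mult_x[OF L2_integrable[OF h(1)]])
  text \<open>\<open>hardy_op f\<close> is not known to be integrable, but \<open>volterra f = mult_x (hardy_op f)\<close> is.\<close>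
  have "AE x in lebesgue01. volterra f x - of_real x * h x = 0"
  proof (rule AE_zero_if_moments_zero)
    show "integrable lebesgue01 (\<lambda>x. volterra f x - of_real x * h x)"
      using integrable_volterra[OF f_int] xh_int by simp
    show "moment (\<lambda>x. volterra f x - of_real x * h x) n = 0" for n
      using moment_diff[OF integrable_volterra[OF f_int] xh_int, of n]
      by (simp add: moment_volterra[OF f_int] moment_mult_x h(3) add.commute)
  qed
  then have "AE x in lebesgue01. hardy_op f x = h x"
    using AE_lebesgue01_nonzero by eventually_elim (simp add: hardy_op_def volterra_def)
  moreover have "hardy_op f \<in> borel_measurable lebesgue01"
  proof -
    have [measurable]: "volterra f \<in> borel_measurable lebesgue01"
      by (rule borel_measurable_volterra[OF f_int])
    have "hardy_op f = (\<lambda>x. volterra f x / of_real x)"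
      by (simp add: fun_eq_iff hardy_op_def volterra_def)
    then show ?thesis
      by simp
  qed
  ultimately have "H2_eq (U (hardy_op f)) (U h)"
    by (intro U_eq_if_AE_eq[OF h(1)])
  then show "H2_eq (U (hardy_op f)) (\<lambda>z. g z - Sstar g z)"
    using h(2) by (rule H2_eq_trans)
qed

lemma conj_eq_mult_x:
  assumes S: "H2_adjoint_of Sstar shift" and C: "H2_adjoint_of Cstar comp_gamma"
  shows "conj_eq U mult_x (\<lambda>g. Sstar (Cstar g))"
  unfolding conj_eq_def
proof (intro ballI impI)
  fix g f assume g: "g \<in> H2" and f: "f \<in> L2" and fg: "H2_eq (U f) g"
  have Cg: "Cstar g \<in> H2"
    using C g by (simp add: H2_adjoint_of_def)
  then obtain c where c: "c \<in> L2" "H2_eq (U c) (Cstar g)"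
    by (rule U_surj)
  have "Sstar (Cstar g) \<in> H2"
    using S Cg by (simp add: H2_adjoint_of_def)
  then obtain s where s: "s \<in> L2" "H2_eq (U s) (Sstar (Cstar g))"
    by (rule U_surj)
  have c_moment: "moment c m = (moment f 0 + of_nat m * moment f (Suc m)) / (of_nat m + 1)" for m
    by (rule moment_of_comp_gamma_adjoint_preimage[of Cstar g f c m, OF C g f fg c])
  have "H2_eq (U (mult_x f)) (U s)"
  proof (rule U_eq_if_positive_moments_eq[OF s(1)])
    show "integrable lebesgue01 (mult_x f)"
      unfolding mult_x_def by (rule integrable_mult_x[OF L2_integrable[OF f]])
    fix n :: nat assume n: "n \<ge> 1"
    have "moment s n = ((of_nat n + 1) * moment c n - moment c 0) / of_nat n"
      by (rule moment_of_shift_adjoint_preimage[of Sstar "Cstar g" c s n, OF S Cg c s n])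
    also have "\<dots> = of_nat n * moment f (Suc n) / of_nat n"
      by (simp add: c_moment)
    also have "\<dots> = moment f (Suc n)"
      using n by simp
    finally show "moment (mult_x f) n = moment s n"
      by (simp add: mult_x_def moment_mult_x)
  qed
  then show "H2_eq (U (mult_x f)) (Sstar (Cstar g))"
    using s(2) by (rule H2_eq_trans)
qed

lemma conj_eq_volterra:
  assumes S: "H2_adjoint_of Sstar shift" and C: "H2_adjoint_of Cstar comp_gamma"
  shows "conj_eq U volterra (\<lambda>g z. Cstar g z - Sstar (Cstar g) z)"
  unfolding conj_eq_def
proof (intro ballI impI)
  fix g f assume g: "g \<in> H2" and f: "f \<in> L2" and fg: "H2_eq (U f) g"
  have Cg: "Cstar g \<in> H2"
    using C g by (simp add: H2_adjoint_of_def)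
  then obtain c where c: "c \<in> L2" "H2_eq (U c) (Cstar g)"
    by (rule U_surj)
  obtain h where h: "h \<in> L2" "H2_eq (U h) (\<lambda>z. Cstar g z - Sstar (Cstar g) z)"
    "\<And>n. n \<ge> 1 \<Longrightarrow> moment h n = (moment c 0 - moment c n) / of_nat n"
    using one_minus_shift_adjoint_preimage[of Sstar "Cstar g" c, OF S Cg c] by blast
  have c_moment: "moment c m = (moment f 0 + of_nat m * moment f (Suc m)) / (of_nat m + 1)" for m
    by (rule moment_of_comp_gamma_adjoint_preimage[of Cstar g f c m, OF C g f fg c])
  have f_int: "integrable lebesgue01 f"
    by (rule L2_integrable[OF f])
  have "H2_eq (U (volterra f)) (U h)"
  proof (rule U_eq_if_positive_moments_eq[OF h(1) integrable_volterra[OF f_int]])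
    fix n :: nat assume n: "n \<ge> 1"
    have "moment h n = (moment c 0 - moment c n) / of_nat n"
      by (rule h(3)[OF n])
    also have "moment c 0 - moment c n = of_nat n * ((moment f 0 - moment f (Suc n)) / (of_nat n + 1))"
      by (simp add: c_moment field_simps)
    also have "\<dots> / of_nat n = (moment f 0 - moment f (Suc n)) / (of_nat n + 1)"
      using n by simp
    finally show "moment (volterra f) n = moment h n"
      by (simp add: moment_volterra[OF f_int])
  qed
  then show "H2_eq (U (volterra f)) (\<lambda>z. Cstar g z - Sstar (Cstar g) z)"
    using h(2) by (rule H2_eq_trans)
qed

end

theorem proposition2p9:
  fixes U :: "(real \<Rightarrow> complex) \<Rightarrow> (complex \<Rightarrow> complex)"
    and Sstar Cstar :: "(complex \<Rightarrow> complex) \<Rightarrow> (complex \<Rightarrow> complex)"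
  assumes "sarason_transform U"
    and "H2_adjoint_of Sstar shift"
    and "H2_adjoint_of Cstar comp_gamma"
  shows "conj_eq U hardy_op (\<lambda>g z. g z - Sstar g z) \<and>
         conj_eq U mult_x (\<lambda>g. Sstar (Cstar g)) \<and>
         conj_eq U volterra (\<lambda>g z. Cstar g z - Sstar (Cstar g) z)"
  using conj_eq_hardy_op[OF assms(1,2)] conj_eq_mult_x[OF assms] conj_eq_volterra[OF assms]
  by blast

end
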